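(* Let $n_1 \ge 3$ be an odd integer, $p$ a prime with $p \equiv 1 \pmod{n_1}$, $\omega = e^{2\pi\imath/p}$, $r$ a primitive root modulo $p$, and $\sigma$ the automorphism of $\mathbb{Q}(\omega)$ with $\sigma(\omega) = \omega^{r}$. Let $m = (p-1)/2$, $\alpha = \prod_{k=0}^{m-1}(1-\omega^{r^k})$, let $\lambda$ be an integer with $\lambda(r-1)\equiv 1 \pmod p$, $z = \omega^{\lambda}\alpha(1-\omega)$, and $x = \sum_{k=1}^{(p-1)/n_1}\sigma^{k n_1}(z)$. Then the $n_1\times n_1$ matrix $G_{n_1} = \frac{1}{p}\big[\sigma^{(i+j) \bmod n_1}(x)\big]_{i,j=0}^{n_1-1}$ (a circulant-type matrix whose rows are successive cyclic left shifts of $\frac1p(x,\sigma(x),\dots,\sigma^{n_1-1}(x))$) is unitary, i.e. $G_{n_1}G_{n_1}^{\dagger} = I_{n_1}$; equivalently, the lattice it generates is orthogonal.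
   Context: $x$ lies in the subfield $\mathbb{K}'$ of $\mathbb{Q}(\omega)$ fixed by $\sigma^{n_1}$, which has degree $n_1$ over $\mathbb{Q}$; $\sigma$ restricted to $\mathbb{K}'$ has order $n_1$, so $\sigma^{(i+j)\bmod n_1}(x) = \sigma^{i+j}(x)$. *)

theory Defs
  imports Complex_Main "HOL-Number_Theory.Number_Theory"
    "HOL-Computational_Algebra.Polynomial"
    "Jordan_Normal_Form.Schur_Decomposition"
begin

definition simple_ext_Q :: "complex \<Rightarrow> complex set" where
  "simple_ext_Q w = (\<lambda>q :: rat poly. poly (map_poly of_rat q) w) ` UNIV"

definition field_aut_on :: "complex set \<Rightarrow> (complex \<Rightarrow> complex) \<Rightarrow> bool" where
  "field_aut_on K s \<longleftrightarrow> bij_betw s K K \<and> s 1 = 1 \<and>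
     (\<forall>a\<in>K. \<forall>b\<in>K. s (a + b) = s a + s b \<and> s (a * b) = s a * s b)"

end

theory Submission
  imports Defs
begin

text \<open>
  Put \<open>\<beta> = \<omega>^\<lambda> \<alpha>\<close>. Since \<open>r^m = -1 (mod p)\<close>, the automorphism \<open>\<sigma>\<close> shifts the factors of
  \<open>\<alpha>\<close> cyclically up to one factor and gives \<open>\<sigma>(\<alpha>) = -\<omega>^(-1) \<alpha>\<close>, while
  \<open>\<lambda>(r - 1) = 1 (mod p)\<close> gives \<open>\<sigma>(\<omega>^\<lambda>) = \<omega>^(\<lambda>+1)\<close>; hence \<open>\<sigma>(\<beta>) = -\<beta>\<close> and
  \<open>\<sigma>^e(z) = (-1)^e \<beta> (1 - \<omega>^(r^e))\<close>. Summing over \<open>e = s (mod n1)\<close>, the constant terms cancel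
  because \<open>n1\<close> is odd and \<open>(p - 1)/n1\<close> is even, so \<open>\<sigma>^s(x) = -\<beta> F(s)\<close> for the signed
  Gauss period \<open>F(s) = \<Sum>a. (-1)^(s+a n1) \<omega>^(r^(s+a n1))\<close>, which is \<open>n1\<close>-periodic.
  Moreover \<open>|\<beta>|^2 = |\<alpha>|^2 = \<Prod>0<a<p. (1 - \<omega>^a) = p\<close>. Unfolding the periods, the inner product
  of two rows of \<open>G\<close> becomes a signed combination of complete sums
  \<open>\<Sum>0<a<p. \<omega>^(c a)\<close>, each equal to \<open>p - 1\<close> or \<open>-1\<close>; the alternating signs cancel everything
  except \<open>p\<close> on the diagonal.
\<close>

section \<open>Automorphisms of \<open>\<rat>(w)\<close> and rational polynomial functions\<close>

interpretation of_rat_poly_hom: map_poly_comm_ring_hom "of_rat :: rat \<Rightarrow> complex" ..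

text \<open>Automorphisms of \<open>\<rat>(w)\<close> commute with these functions; this is all the Galois
  theory the proof needs.\<close>

definition rat_poly_fun :: "(complex \<Rightarrow> complex) \<Rightarrow> bool" where
  "rat_poly_fun f \<longleftrightarrow> (\<exists>q. \<forall>w. f w = poly (map_poly of_rat q) w)"

lemma rat_poly_funI: "(\<And>w. f w = poly (map_poly of_rat q) w) \<Longrightarrow> rat_poly_fun f"
  unfolding rat_poly_fun_def by blast

lemma rat_poly_funE:
  assumes "rat_poly_fun f"
  obtains q where "\<And>w. f w = poly (map_poly of_rat q) w"
  using assms unfolding rat_poly_fun_def by blast

lemma rat_poly_fun_const [intro]: "rat_poly_fun (\<lambda>_. of_rat c)"
  by (rule rat_poly_funI[of _ "[:c:]"]) (simp add: of_rat_hom.map_poly_pCons_hom)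

lemma rat_poly_fun_one [intro]: "rat_poly_fun (\<lambda>_. 1)"
  using rat_poly_fun_const[of 1] by simp

lemma rat_poly_fun_ident [intro]: "rat_poly_fun (\<lambda>w. w)"
  by (rule rat_poly_funI[of _ "[:0, 1:]"]) (simp add: of_rat_hom.map_poly_pCons_hom)

lemma rat_poly_fun_add [intro]:
  assumes "rat_poly_fun f" "rat_poly_fun g"
  shows "rat_poly_fun (\<lambda>w. f w + g w)"
proof -
  obtain q q' where "\<And>w. f w = poly (map_poly of_rat q) w" "\<And>w. g w = poly (map_poly of_rat q') w"
    using assms by (metis rat_poly_funE)
  then show ?thesis by (intro rat_poly_funI[of _ "q + q'"]) (simp add: of_rat_poly_hom.hom_add)
qed

lemma rat_poly_fun_diff [intro]:
  assumes "rat_poly_fun f" "rat_poly_fun g"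
  shows "rat_poly_fun (\<lambda>w. f w - g w)"
proof -
  obtain q q' where "\<And>w. f w = poly (map_poly of_rat q) w" "\<And>w. g w = poly (map_poly of_rat q') w"
    using assms by (metis rat_poly_funE)
  then show ?thesis by (intro rat_poly_funI[of _ "q - q'"]) (simp add: of_rat_poly_hom.hom_minus)
qed

lemma rat_poly_fun_mult [intro]:
  assumes "rat_poly_fun f" "rat_poly_fun g"
  shows "rat_poly_fun (\<lambda>w. f w * g w)"
proof -
  obtain q q' where "\<And>w. f w = poly (map_poly of_rat q) w" "\<And>w. g w = poly (map_poly of_rat q') w"
    using assms by (metis rat_poly_funE)
  then show ?thesis by (intro rat_poly_funI[of _ "q * q'"]) (simp add: of_rat_poly_hom.hom_mult)
qed

lemma rat_poly_fun_compose [intro]: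
  assumes "rat_poly_fun f" "rat_poly_fun g"
  shows "rat_poly_fun (\<lambda>w. f (g w))"
proof -
  obtain q q' where "\<And>w. f w = poly (map_poly of_rat q) w" "\<And>w. g w = poly (map_poly of_rat q') w"
    using assms by (metis rat_poly_funE)
  then show ?thesis
    by (intro rat_poly_funI[of _ "q \<circ>\<^sub>p q'"]) (simp add: of_rat_hom.map_poly_pcompose poly_pcompose)
qed

lemma rat_poly_fun_power [intro]: "rat_poly_fun f \<Longrightarrow> rat_poly_fun (\<lambda>w. f w ^ n)"
  by (induction n) auto

lemma rat_poly_fun_sum [intro]:
  "(\<And>i. i \<in> I \<Longrightarrow> rat_poly_fun (f i)) \<Longrightarrow> rat_poly_fun (\<lambda>w. \<Sum>i\<in>I. f i w)"
  by (induction I rule: infinite_finite_induct) (use rat_poly_fun_const[of 0] in auto)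

lemma rat_poly_fun_prod [intro]:
  "(\<And>i. i \<in> I \<Longrightarrow> rat_poly_fun (f i)) \<Longrightarrow> rat_poly_fun (\<lambda>w. \<Prod>i\<in>I. f i w)"
  by (induction I rule: infinite_finite_induct) auto

lemma rat_poly_fun_in_simple_ext_Q: "rat_poly_fun f \<Longrightarrow> f w \<in> simple_ext_Q w"
  unfolding simple_ext_Q_def by (auto elim: rat_poly_funE)

lemma field_aut_on_of_rat:
  assumes s: "field_aut_on K s" and rat: "\<And>c. of_rat c \<in> K"
  shows "s (of_rat c) = of_rat c"
proof -
  define \<phi> where "\<phi> c = s (of_rat c)" for c
  have add: "\<phi> (a + b) = \<phi> a + \<phi> b" and mult: "\<phi> (a * b) = \<phi> a * \<phi> b" for a b
    using s rat unfolding \<phi>_def field_aut_on_def by (simp_all add: of_rat_add of_rat_mult)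
  have zero: "\<phi> 0 = 0" using add[of 0 0] by simp
  have neg: "\<phi> (- a) = - \<phi> a" for a using add[of a "- a"] zero by (simp add: add_eq_0_iff)
  have one: "\<phi> 1 = 1" using s unfolding \<phi>_def field_aut_on_def by simp
  have of_nat: "\<phi> (of_nat k) = of_nat k" for k
    by (induction k) (simp_all add: zero one add)
  have of_int: "\<phi> (of_int k) = of_int k" for k
    by (cases k rule: int_cases2) (simp_all add: of_nat neg)
  obtain a b where c: "c = of_int a / of_int b" and b: "b \<noteq> 0"
    by (cases c rule: Rat_cases) (auto simp: Fract_of_int_quotient)
  have "of_int b * \<phi> c = of_int a"
    using mult[of "of_int b" c] b by (simp add: c of_int)
  then have "\<phi> c = of_rat c" using b by (simp add: c of_rat_divide field_simps)
  then show ?thesis unfolding \<phi>_def .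
qed

lemma field_aut_on_rat_poly_fun:
  assumes s: "field_aut_on (simple_ext_Q w) s" and f: "rat_poly_fun f"
  shows "s (f w) = f (s w)"
proof -
  obtain q where f_eq: "\<And>v. f v = poly (map_poly of_rat q) v" using f by (metis rat_poly_funE)
  have hom: "s (a + b) = s a + s b" "s (a * b) = s a * s b"
    if "a \<in> simple_ext_Q w" "b \<in> simple_ext_Q w" for a b
    using s that unfolding field_aut_on_def by blast+
  have mem: "rat_poly_fun g \<Longrightarrow> g w \<in> simple_ext_Q w" for g by (rule rat_poly_fun_in_simple_ext_Q)
  have "s (poly (map_poly of_rat q) w) = poly (map_poly of_rat q) (s w)"
  proof (induction q)
    case 0
    show ?case using field_aut_on_of_rat[OF s mem[OF rat_poly_fun_const], of 0] by simp
  next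
    case (pCons a q)
    have Q: "rat_poly_fun (poly (map_poly of_rat q))" by (rule rat_poly_funI) simp
    have "s (of_rat a + w * poly (map_poly of_rat q) w)
        = s (of_rat a) + s w * s (poly (map_poly of_rat q) w)"
      using mem[OF rat_poly_fun_const] mem[OF rat_poly_fun_ident] mem[OF Q]
        mem[OF rat_poly_fun_mult[OF rat_poly_fun_ident Q]] by (simp add: hom)
    also have "s (of_rat a) = of_rat a"
      using field_aut_on_of_rat[OF s mem[OF rat_poly_fun_const]] .
    finally show ?case using pCons.IH by (simp add: of_rat_hom.map_poly_pCons_hom)
  qed
  then show ?thesis unfolding f_eq .
qed

lemma funpow_field_aut_on_rat_poly_fun:
  assumes s: "field_aut_on (simple_ext_Q w) s" and s_w: "s w = w ^ r" and f: "rat_poly_fun f"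
  shows "(s ^^ e) (f w) = f (w ^ r ^ e)"
proof (induction e)
  case (Suc e)
  have "(s ^^ Suc e) (f w) = s (f (w ^ r ^ e))" using Suc by simp
  also have "\<dots> = f (w ^ r ^ Suc e)"
    using field_aut_on_rat_poly_fun[OF s rat_poly_fun_compose[OF f rat_poly_fun_power[OF rat_poly_fun_ident]]]
    by (simp add: s_w power_mult[symmetric] mult.commute)
  finally show ?case .
qed simp

section \<open>Roots of unity and primitive roots\<close>

definition unity_root :: "nat \<Rightarrow> complex" where
  "unity_root p = exp (2 * pi * \<i> / of_nat p)"

lemma unity_root_pow: "unity_root p ^ a = cis (2 * pi * a / p)"
  unfolding unity_root_def cis_conv_exp exp_of_nat_mult[symmetric] by (simp add: field_simps)

lemma unity_root_pow_eq_1_iff: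
  assumes "p > 0"
  shows "unity_root p ^ a = 1 \<longleftrightarrow> p dvd a"
proof
  assume "unity_root p ^ a = 1"
  then have "cos (2 * pi * a / p) = 1" by (simp add: unity_root_pow complex_eq_iff)
  then obtain k :: int where "2 * pi * a / p = k * (2 * pi)" by (auto simp: cos_one_2pi_int)
  then have "real_of_int (int a) = real_of_int (k * int p)" using assms by (simp add: field_simps)
  then have "int a = k * int p" by (rule of_int_eq_iff[THEN iffD1])
  then show "p dvd a" by (metis dvd_triv_right int_dvd_int_iff)
next
  assume "p dvd a"
  then obtain k where "a = p * k" ..
  moreover have "unity_root p ^ p = 1" using assms by (simp add: unity_root_pow)
  ultimately show "unity_root p ^ a = 1" by (simp add: power_mult)
qed

lemma unity_root_nonzero [simp]: "unity_root p \<noteq> 0"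
  by (simp add: unity_root_def)

lemma norm_unity_root [simp]: "norm (unity_root p) = 1"
  by (simp add: unity_root_def)

lemma unity_root_pow_p: "p > 0 \<Longrightarrow> unity_root p ^ p = 1"
  by (simp add: unity_root_pow_eq_1_iff)

text \<open>The difference \<open>a - b\<close> is replaced by \<open>a + (p - 1) b\<close> to avoid truncated subtraction.\<close>

lemma cong_iff_dvd_add_mult_pred:
  fixes a b p :: nat
  assumes "p > 0"
  shows "[a = b] (mod p) \<longleftrightarrow> p dvd a + (p - 1) * b"
proof -
  have "int (a + (p - 1) * b) = (int a - int b) + int p * int b"
    using assms by (cases p) (simp_all add: algebra_simps)
  then have "int p dvd int a - int b \<longleftrightarrow> int p dvd int (a + (p - 1) * b)"
    by (metis dvd_add_left_iff dvd_triv_left)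
  then show ?thesis by (simp add: cong_iff_dvd_diff flip: cong_int_iff int_dvd_int_iff)
qed

lemma unity_root_pow_mult_pred:
  assumes "p > 0"
  shows "unity_root p ^ b * unity_root p ^ ((p - 1) * b) = 1"
proof -
  have "b + (p - 1) * b = p * b" using assms by (cases p) simp_all
  then show ?thesis using assms by (simp add: unity_root_pow_eq_1_iff flip: power_add)
qed

lemma unity_root_pow_eq_iff:
  assumes "p > 0"
  shows "unity_root p ^ a = unity_root p ^ b \<longleftrightarrow> [a = b] (mod p)"
proof -
  have "unity_root p ^ a = unity_root p ^ b \<longleftrightarrow> unity_root p ^ a * unity_root p ^ ((p - 1) * b) = 1"
    using unity_root_pow_mult_pred[OF assms, of b] by (metis mult_cancel_right unity_root_nonzero power_not_zero)
  also have "\<dots> \<longleftrightarrow> [a = b] (mod p)"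
    by (simp add: assms unity_root_pow_eq_1_iff cong_iff_dvd_add_mult_pred flip: power_add)
  finally show ?thesis .
qed

lemma unity_root_powi_cong:
  assumes "p > 0" "[a = b] (mod int p)"
  shows "unity_root p powi a = unity_root p powi b"
proof -
  obtain k where "a = b + int p * k" using assms(2) by (metis cong_iff_lin cong_sym)
  then show ?thesis using unity_root_pow_p[OF assms(1)] by (simp add: power_int_add power_int_mult)
qed

lemma cnj_unity_root_pow: "p > 0 \<Longrightarrow> cnj (unity_root p ^ a) = unity_root p ^ ((p - 1) * a)"
proof -
  assume p: "p > 0"
  have "norm (unity_root p ^ a) = 1" by (simp add: norm_power)
  then have "unity_root p ^ a * cnj (unity_root p ^ a) = 1"
    by (metis complex_norm_square of_real_1 power_one)
  then show ?thesis using unity_root_pow_mult_pred[OF p, of a]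
    by (metis mult_cancel_left power_not_zero unity_root_nonzero)
qed

lemma sum_unity_root_pow:
  assumes "p > 0"
  shows "(\<Sum>a\<in>{0<..<p}. (unity_root p ^ t) ^ a) = (if p dvd t then of_nat p - 1 else - 1)"
proof -
  let ?x = "unity_root p ^ t"
  have "?x ^ p = 1"
    using unity_root_pow_p[OF assms] by (metis mult.commute power_mult power_one)
  then have geom: "(\<Sum>a<p. ?x ^ a) = (if ?x = 1 then of_nat p else 0)"
    by (auto simp: sum_gp_strict)
  have "{..<p} = insert 0 {0<..<p}" using assms by auto
  then have "(\<Sum>a\<in>{0<..<p}. ?x ^ a) = (\<Sum>a<p. ?x ^ a) - 1" by simp
  then show ?thesis by (simp add: geom unity_root_pow_eq_1_iff[OF assms])
qed

text \<open>\<open>\<Prod>0<a<p. (X - \<omega>^a)\<close> and \<open>1 + X + \<dots> + X^(p-1)\<close> are monic of degree \<open>p - 1\<close> with the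
  same \<open>p - 1\<close> roots; evaluate at \<open>1\<close>.\<close>

lemma prod_one_minus_unity_root_pow:
  assumes "p > 0"
  shows "(\<Prod>a\<in>{0<..<p}. 1 - unity_root p ^ a) = of_nat p"
proof -
  define P where "P = (\<Prod>a\<in>{0<..<p}. [:- (unity_root p ^ a), 1:])"
  define Q where "Q = (\<Sum>k<p. monom (1::complex) k)"
  define A where "A = (\<lambda>a. unity_root p ^ a) ` {0<..<p}"
  have "inj_on (\<lambda>a. unity_root p ^ a) {0<..<p}"
    by (auto simp: inj_on_def unity_root_pow_eq_iff[OF assms] cong_def)
  then have card_A: "card A = p - 1" unfolding A_def by (simp add: card_image)
  have deg_P: "degree P = p - 1" and lead_P: "coeff P (p - 1) = 1"
    using degree_prod_sum_monic[of "{0<..<p}" "\<lambda>a. [:- (unity_root p ^ a), 1:]"]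
    unfolding P_def by auto
  have "degree Q \<le> p - 1"
    unfolding Q_def by (rule degree_sum_le) (auto intro: order.trans[OF degree_monom_le])
  moreover have "coeff Q (p - 1) = 1"
    unfolding Q_def using assms by (simp add: coeff_sum)
  moreover have "poly P x = poly Q x" if "x \<in> A" for x
  proof -
    obtain a where a: "a \<in> {0<..<p}" "x = unity_root p ^ a" using \<open>x \<in> A\<close> unfolding A_def by auto
    have "poly P x = 0" unfolding P_def poly_prod using a by (auto intro!: prod_zero)
    moreover have "x \<noteq> 1" "x ^ p = 1"
      using a unity_root_pow_eq_1_iff[OF assms] by (auto simp flip: power_mult)
    then have "poly Q x = 0" unfolding Q_def by (simp add: poly_sum poly_monom sum_gp_strict)
    ultimately show ?thesis by simp
  qed
  ultimately have "P = Q"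
    using deg_P lead_P card_A by (intro poly_eqI_degree_lead_coeff[where n = "p - 1" and A = A]) auto
  then have "poly P 1 = poly Q 1" by simp
  then show ?thesis unfolding P_def Q_def by (simp add: poly_prod poly_sum poly_monom)
qed

lemma residue_primroot_pow_bij:
  assumes "prime p" "residue_primroot p r"
  shows "bij_betw (\<lambda>i. r ^ i mod p) {..<p - 1} {0<..<p}"
  using residue_primroot_is_generator[of p r] assms prime_gt_1_nat[of p]
  by (simp add: totient_prime totatives_prime)

lemma residue_primroot_pow_cong_iff:
  assumes "prime p" "residue_primroot p r"
  shows "[r ^ a = r ^ b] (mod p) \<longleftrightarrow> [a = b] (mod (p - 1))"
  using order_divides_expdiff[of p r a b] assms by (auto simp: residue_primroot_def totient_prime)

lemma residue_primroot_pow_half: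
  assumes "prime p" "odd p" "residue_primroot p r"
  shows "p dvd r ^ ((p - 1) div 2) + 1"
proof -
  define h where "h = (p - 1) div 2"
  have ord: "ord p r = p - 1" and pos: "r > 0"
    using assms prime_gt_1_nat[of p] by (auto simp: residue_primroot_def totient_prime intro: gr0I)
  have p_minus_1: "p - 1 = 2 * h" unfolding h_def using assms(2) by presburger
  have "[r ^ (p - 1) = 1] (mod p)" using ord ord_works[of r p] by simp
  then have "[int (r ^ h) * int (r ^ h) = 1] (mod int p)"
    by (metis cong_int_iff of_nat_1 of_nat_mult power_add mult_2 p_minus_1)
  moreover have "\<not> [int (r ^ h) = 1] (mod int p)"
  proof
    assume "[int (r ^ h) = 1] (mod int p)"
    then have "(p - 1) dvd h" using ord ord_divides[of r h p] by (metis cong_int_iff of_nat_1)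
    moreover have "0 < h" "h < p - 1"
      using p_minus_1 prime_gt_1_nat[OF assms(1)] by auto
    ultimately show False by (auto dest: dvd_imp_le)
  qed
  ultimately have "[int (r ^ h) = - 1] (mod int p)"
    using cong_square[of "int p" "int (r ^ h)"] assms(1) pos by auto
  then have "int p dvd int (r ^ h + 1)" by (simp add: cong_iff_dvd_diff add.commute)
  then show ?thesis unfolding h_def int_dvd_int_iff .
qed

section \<open>Signed Gauss periods\<close>

lemma sum_neg_one_pow_even:
  assumes "even N"
  shows "(\<Sum>b<N. (- 1 :: 'a :: ring_1) ^ b) = 0"
proof -
  obtain t where "N = 2 * t" using assms ..
  moreover have "(\<Sum>b<2 * t. (- 1 :: 'a) ^ b) = 0" by (induction t) simp_all
  ultimately show ?thesis by simp
qed

lemma sum_lessThan_mult_regroup: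
  fixes N n :: nat
  shows "(\<Sum>u<N * n. h u) = (\<Sum>j<n. \<Sum>a<N. h (j + a * n))"
proof -
  have "(\<Sum>u<N * n. h u) = (\<Sum>a<N. \<Sum>j\<in>{0 + a * n..<n + a * n}. h j)"
    by (simp add: sum.nat_group[symmetric] add.commute)
  also have "\<dots> = (\<Sum>a<N. \<Sum>j<n. h (j + a * n))"
    by (simp only: sum.shift_bounds_nat_ivl atLeast0LessThan)
  finally show ?thesis by (rule trans) (rule sum.swap)
qed

lemma sum_stride_shift:
  fixes N n :: nat and h :: "nat \<Rightarrow> 'a :: cancel_comm_monoid_add"
  assumes "\<And>s. h (s + N * n) = h s"
  shows "(\<Sum>a<N. h (s + n + a * n)) = (\<Sum>a<N. h (s + a * n))"
proof -
  have "(\<Sum>a<N. h (s + n + a * n)) + h s = (\<Sum>a<Suc N. h (s + a * n))"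
    unfolding sum.lessThan_Suc_shift by (simp add: algebra_simps)
  also have "\<dots> = (\<Sum>a<N. h (s + a * n)) + h s"
    using assms[of s] by (simp only: sum.lessThan_Suc)
  finally show ?thesis by simp
qed

locale primroot_cyclotomic =
  fixes p r :: nat
  assumes prime: "prime p" and odd: "odd p" and primroot: "residue_primroot p r"
begin

abbreviation \<omega> :: complex where "\<omega> \<equiv> unity_root p"

abbreviation m :: nat where "m \<equiv> (p - 1) div 2"

definition \<alpha> :: complex where "\<alpha> = (\<Prod>k<m. 1 - \<omega> ^ r ^ k)"

lemma p_pos: "p > 0"
  using prime prime_gt_0_nat by blast

lemma half_add_half: "m + m = p - 1"
  using odd by presburger

lemma even_p_minus_1: "even (p - 1)"
  using odd p_pos by simp

lemma root_pow_cong: "[a = b] (mod p) \<Longrightarrow> \<omega> ^ a = \<omega> ^ b"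
  by (simp add: unity_root_pow_eq_iff[OF p_pos])

lemma not_dvd_r_pow: "\<not> p dvd r ^ e"
proof
  assume "p dvd r ^ e"
  moreover have "coprime p (r ^ e)" using primroot by (simp add: residue_primroot_def)
  ultimately have "is_unit p" by (intro coprime_common_divisor[of p "r ^ e"]) simp_all
  then show False using prime by simp
qed

lemma root_pow_half_shift: "\<omega> ^ r ^ (k + m) = \<omega> ^ ((p - 1) * r ^ k)"
proof (rule root_pow_cong)
  have "[r ^ m + 1 = 0] (mod p)"
    using residue_primroot_pow_half[OF prime odd primroot] by (simp add: cong_0_iff)
  moreover have "[p - 1 + 1 = 0] (mod p)"
    using p_pos by (simp add: cong_0_iff)
  ultimately have "[r ^ m + 1 = p - 1 + 1] (mod p)"
    by (rule cong_trans[OF _ cong_sym])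
  then have "[r ^ m = p - 1] (mod p)"
    by (rule cong_add_rcancel_nat[THEN iffD1])
  from cong_mult[OF this cong_refl[of "r ^ k"]]
  show "[r ^ (k + m) = (p - 1) * r ^ k] (mod p)"
    by (simp add: power_add mult.commute)
qed

lemma cnj_root_pow: "cnj (\<omega> ^ r ^ k) = \<omega> ^ r ^ (k + m)"
  by (simp only: cnj_unity_root_pow[OF p_pos] root_pow_half_shift)

lemma root_pow_mult_half_shift: "\<omega> ^ r ^ k * \<omega> ^ r ^ (k + m) = 1"
  by (simp only: root_pow_half_shift unity_root_pow_mult_pred[OF p_pos])

lemma alpha_mult_cnj: "\<alpha> * cnj \<alpha> = of_nat p"
proof -
  let ?g = "\<lambda>k. 1 - \<omega> ^ r ^ k"
  have "cnj (?g k) = ?g (k + m)" for k by (simp only: complex_cnj_diff complex_cnj_one cnj_root_pow)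
  then have "cnj \<alpha> = (\<Prod>k<m. ?g (k + m))"
    unfolding \<alpha>_def by (simp only: cnj_prod)
  also have "\<dots> = prod ?g {m..<m + m}"
    using prod.shift_bounds_nat_ivl[of ?g 0 m m] by (simp add: atLeast0LessThan)
  finally have "\<alpha> * cnj \<alpha> = prod ?g {0..<m} * prod ?g {m..<m + m}"
    by (simp only: \<alpha>_def atLeast0LessThan[symmetric])
  also have "\<dots> = prod ?g {0..<m + m}"
    by (rule prod.atLeastLessThan_concat) simp_all
  also have "\<dots> = (\<Prod>k<p - 1. ?g k)"
    by (simp only: half_add_half atLeast0LessThan)
  also have "\<dots> = (\<Prod>k<p - 1. 1 - \<omega> ^ (r ^ k mod p))"
    by (intro prod.cong refl arg_cong2[where f = "(-)"] root_pow_cong) (simp add: cong_def)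
  also have "\<dots> = (\<Prod>a\<in>{0<..<p}. 1 - \<omega> ^ a)"
    using prod.reindex_bij_betw[OF residue_primroot_pow_bij[OF prime primroot]] by simp
  also have "\<dots> = of_nat p"
    by (rule prod_one_minus_unity_root_pow[OF p_pos])
  finally show ?thesis .
qed

lemma half_prod_shift:
  "\<omega> ^ r ^ e * (\<Prod>k<m. 1 - \<omega> ^ r ^ (k + Suc e)) = - (\<Prod>k<m. 1 - \<omega> ^ r ^ (k + e))"
proof -
  let ?g = "\<lambda>k. 1 - \<omega> ^ r ^ k"
  let ?A = "\<Prod>k<m. ?g (k + Suc e)" and ?B = "\<Prod>k<m. ?g (k + e)"
  have nonzero: "?g e \<noteq> 0" using not_dvd_r_pow unity_root_pow_eq_1_iff[OF p_pos] by simp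
  have split: "?A * ?g e = ?B * ?g (m + e)"
    using prod.lessThan_Suc_shift[of "\<lambda>k. ?g (k + e)" m] by (simp add: mult.commute)
  have half: "\<omega> ^ r ^ e * ?g (m + e) = - ?g e"
    using root_pow_mult_half_shift[of e] by (simp add: algebra_simps)
  have "(\<omega> ^ r ^ e * ?A) * ?g e = ?B * (\<omega> ^ r ^ e * ?g (m + e))"
    by (simp only: mult.assoc split mult.left_commute[of "\<omega> ^ r ^ e"])
  also have "\<dots> = (- ?B) * ?g e" by (simp only: half mult_minus_left mult_minus_right)
  finally show ?thesis by (rule mult_right_cancel[THEN iffD1, OF nonzero])
qed

text \<open>Written without \<open>\<sigma>\<close>, this is \<open>\<sigma>^e(\<omega>^\<lambda> \<alpha>) = (-1)^e \<omega>^\<lambda> \<alpha>\<close>.\<close>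

lemma twisted_alpha_conjugate:
  assumes lam: "[lam * (int r - 1) = 1] (mod int p)"
  shows "(\<omega> powi lam) ^ r ^ e * (\<Prod>k<m. 1 - \<omega> ^ r ^ (k + e)) = (- 1) ^ e * \<omega> powi lam * \<alpha>"
proof (induction e)
  case 0
  show ?case by (simp add: \<alpha>_def)
next
  case (Suc e)
  have "(\<omega> powi lam) ^ r = \<omega> powi (lam * int r)"
    by (simp add: power_int_mult)
  also have "lam * int r = lam + lam * (int r - 1)"
    by (simp add: algebra_simps)
  also have "\<omega> powi \<dots> = \<omega> powi lam * \<omega> powi (lam * (int r - 1))"
    by (simp add: power_int_add)
  also have "\<omega> powi (lam * (int r - 1)) = \<omega>"
    using unity_root_powi_cong[OF p_pos lam] by simp
  finally have "(\<omega> powi lam) ^ r ^ Suc e = (\<omega> powi lam) ^ r ^ e * \<omega> ^ r ^ e"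
    by (simp add: power_mult power_mult_distrib)
  then have "(\<omega> powi lam) ^ r ^ Suc e * (\<Prod>k<m. 1 - \<omega> ^ r ^ (k + Suc e))
      = - ((\<omega> powi lam) ^ r ^ e * (\<Prod>k<m. 1 - \<omega> ^ r ^ (k + e)))"
    using half_prod_shift[of e] by (simp add: mult.assoc)
  then show ?case using Suc.IH by simp
qed

text \<open>\<open>signed_conj e = (-1)^e \<sigma>^e(\<omega>)\<close>.\<close>

definition signed_conj :: "nat \<Rightarrow> complex" where
  "signed_conj e = (- 1) ^ e * \<omega> ^ r ^ e"

lemma signed_conj_periodic: "signed_conj (e + (p - 1)) = signed_conj e"
proof -
  have "[r ^ (e + (p - 1)) = r ^ e] (mod p)"
    using residue_primroot_pow_cong_iff[OF prime primroot] by (simp add: cong_def)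
  then have "\<omega> ^ r ^ (e + (p - 1)) = \<omega> ^ r ^ e" by (rule root_pow_cong)
  moreover have "(- 1 :: complex) ^ (e + (p - 1)) = (- 1) ^ e"
    using even_p_minus_1 by (simp add: power_add)
  ultimately show ?thesis unfolding signed_conj_def by simp
qed

lemma cnj_signed_conj: "cnj (signed_conj e) = (- 1) ^ e * \<omega> ^ ((p - 1) * r ^ e)"
  unfolding signed_conj_def by (simp only: complex_cnj_mult cnj_unity_root_pow[OF p_pos]) simp

lemma signed_conj_mult_cnj:
  "signed_conj (i + u) * cnj (signed_conj (e + u))
    = (- 1) ^ (i + e) * (\<omega> ^ (r ^ i + (p - 1) * r ^ e)) ^ (r ^ u mod p)"
proof -
  define c where "c = r ^ i + (p - 1) * r ^ e"
  have "(- 1 :: complex) ^ (i + u) * (- 1) ^ (e + u) = (- 1) ^ (i + e) * ((- 1) * (- 1)) ^ u"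
    by (simp only: power_add power_mult_distrib ac_simps)
  then have sign: "(- 1 :: complex) ^ (i + u) * (- 1) ^ (e + u) = (- 1) ^ (i + e)" by simp
  have "r ^ (i + u) + (p - 1) * r ^ (e + u) = c * r ^ u"
    unfolding c_def by (simp add: power_add algebra_simps)
  then have "\<omega> ^ r ^ (i + u) * \<omega> ^ ((p - 1) * r ^ (e + u)) = \<omega> ^ (c * r ^ u)"
    by (simp flip: power_add)
  also have "\<dots> = \<omega> ^ (c * (r ^ u mod p))"
    by (rule root_pow_cong) (simp add: cong_def mod_mult_right_eq)
  finally have root: "\<omega> ^ r ^ (i + u) * \<omega> ^ ((p - 1) * r ^ (e + u)) = (\<omega> ^ c) ^ (r ^ u mod p)"
    by (simp add: power_mult)
  have "signed_conj (i + u) * cnj (signed_conj (e + u))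
      = ((- 1) ^ (i + u) * (- 1) ^ (e + u)) * (\<omega> ^ r ^ (i + u) * \<omega> ^ ((p - 1) * r ^ (e + u)))"
    by (simp only: signed_conj_def[of "i + u"] cnj_signed_conj mult_ac)
  then show ?thesis unfolding c_def[symmetric] by (simp only: sign root)
qed

lemma signed_conj_autocorrelation:
  assumes "i < p - 1" "e < p - 1"
  shows "(\<Sum>u<p - 1. signed_conj (i + u) * cnj (signed_conj (e + u)))
    = (- 1) ^ (i + e) * (if i = e then of_nat p - 1 else - 1)"
proof -
  define c where "c = r ^ i + (p - 1) * r ^ e"
  have "(\<Sum>u<p - 1. signed_conj (i + u) * cnj (signed_conj (e + u)))
      = (- 1) ^ (i + e) * (\<Sum>u<p - 1. (\<omega> ^ c) ^ (r ^ u mod p))"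
    by (simp add: signed_conj_mult_cnj c_def sum_distrib_left)
  also have "(\<Sum>u<p - 1. (\<omega> ^ c) ^ (r ^ u mod p)) = (\<Sum>a\<in>{0<..<p}. (\<omega> ^ c) ^ a)"
    using sum.reindex_bij_betw[OF residue_primroot_pow_bij[OF prime primroot]] by simp
  also have "\<dots> = (if i = e then of_nat p - 1 else - 1)"
  proof -
    have "p dvd c \<longleftrightarrow> [r ^ i = r ^ e] (mod p)"
      unfolding c_def by (rule cong_iff_dvd_add_mult_pred[OF p_pos, symmetric])
    also have "\<dots> \<longleftrightarrow> [i = e] (mod (p - 1))"
      by (rule residue_primroot_pow_cong_iff[OF prime primroot])
    also have "\<dots> \<longleftrightarrow> i = e"
      using assms by (simp add: cong_def)
    finally show ?thesis by (simp add: sum_unity_root_pow[OF p_pos])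
  qed
  finally show ?thesis .
qed

end

locale primroot_cyclotomic_period = primroot_cyclotomic +
  fixes n :: nat
  assumes odd_n: "odd n" and n_dvd: "n dvd p - 1"
begin

definition N :: nat where "N = (p - 1) div n"

lemma N_mult_n: "N * n = p - 1"
  using n_dvd by (simp add: N_def)

lemma even_N: "even N"
  using even_p_minus_1 odd_n N_mult_n by (metis even_mult_iff)

lemma N_pos: "N > 0"
  using N_mult_n prime_gt_1_nat[OF prime] by (cases N) auto

lemma n_le_p_minus_1: "n \<le> p - 1"
proof -
  have "1 * n \<le> N * n" using N_pos by (intro mult_le_mono1) simp
  then show ?thesis by (simp add: N_mult_n)
qed

lemma neg_one_pow_mult_n: "(- 1 :: complex) ^ (a * n) = (- 1) ^ a"
  using odd_n by (simp add: power_mult_distrib mult.commute[of a] power_mult)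

definition signed_period :: "nat \<Rightarrow> complex" where
  "signed_period s = (\<Sum>a<N. signed_conj (s + a * n))"

lemma signed_period_periodic: "signed_period (s + n) = signed_period s"
  unfolding signed_period_def
  by (rule sum_stride_shift) (simp only: N_mult_n signed_conj_periodic)

lemma signed_period_add_mult: "signed_period (s + q * n) = signed_period s"
proof (induction q)
  case (Suc q)
  have "s + Suc q * n = (s + q * n) + n" by simp
  then show ?case by (simp only: signed_period_periodic Suc.IH)
qed simp

lemma signed_period_mod: "signed_period (s mod n) = signed_period s"
  using signed_period_add_mult[of "s mod n" "s div n"] by simp

lemma sum_signed_conjugates:
  "(\<Sum>k = 1..N. (- 1) ^ (s + k * n) * c * (1 - \<omega> ^ r ^ (s + k * n))) = - c * signed_period s"
proof -
  define h where "h e = (- 1) ^ e * c - c * signed_conj e" for e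
  have "(- 1 :: complex) ^ (p - 1) = 1" using even_p_minus_1 by simp
  then have h_periodic: "h (e + N * n) = h e" for e
    unfolding h_def N_mult_n power_add signed_conj_periodic by simp
  have "(\<Sum>k = 1..N. (- 1) ^ (s + k * n) * c * (1 - \<omega> ^ r ^ (s + k * n))) = (\<Sum>a<N. h (s + n + a * n))"
    by (simp add: sum.atLeast1_atMost_eq h_def signed_conj_def algebra_simps)
  also have "\<dots> = (\<Sum>a<N. h (s + a * n))"
    using h_periodic by (rule sum_stride_shift)
  also have "\<dots> = (- 1) ^ s * c * (\<Sum>a<N. (- 1) ^ a) - c * signed_period s"
    by (simp add: h_def signed_period_def sum_subtractf sum_distrib_left power_add
        neg_one_pow_mult_n ac_simps)
  finally show ?thesis by (simp add: sum_neg_one_pow_even[OF even_N])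
qed

lemma signed_period_correlation_expand:
  "(\<Sum>j<n. signed_period (i + j) * cnj (signed_period (k + j)))
    = (\<Sum>b<N. \<Sum>u<p - 1. signed_conj (i + u) * cnj (signed_conj (k + b * n + u)))"
proof -
  have "(\<Sum>j<n. signed_period (i + j) * cnj (signed_period (k + j)))
      = (\<Sum>j<n. \<Sum>a<N. signed_conj (i + (j + a * n)) * cnj (signed_period (k + (j + a * n))))"
  proof (rule sum.cong[OF refl])
    fix j
    have "signed_period (k + (j + a * n)) = signed_period (k + j)" for a
      using signed_period_add_mult[of "k + j" a] by (simp add: add.assoc)
    then show "signed_period (i + j) * cnj (signed_period (k + j))
        = (\<Sum>a<N. signed_conj (i + (j + a * n)) * cnj (signed_period (k + (j + a * n))))"
      by (simp add: signed_period_def[of "i + j"] sum_distrib_right add.assoc)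
  qed
  also have "\<dots> = (\<Sum>u<p - 1. signed_conj (i + u) * cnj (signed_period (k + u)))"
    using sum_lessThan_mult_regroup[of "\<lambda>u. signed_conj (i + u) * cnj (signed_period (k + u))" N n]
    by (simp add: N_mult_n)
  also have "\<dots> = (\<Sum>b<N. \<Sum>u<p - 1. signed_conj (i + u) * cnj (signed_conj (k + b * n + u)))"
    by (simp add: signed_period_def sum_distrib_left ac_simps sum.swap[where B = "{..<N}"])
  finally show ?thesis .
qed

lemma signed_period_autocorrelation:
  assumes "i < n" "k < n"
  shows "(\<Sum>j<n. signed_period (i + j) * cnj (signed_period (k + j))) = (if i = k then of_nat p else 0)"
proof -
  have inner: "(\<Sum>u<p - 1. signed_conj (i + u) * cnj (signed_conj (k + b * n + u)))
      = (- 1) ^ (i + k) * ((if i = k \<and> b = 0 then of_nat p else 0) - (- 1) ^ b)" if "b < N" for b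
  proof -
    have "k + b * n < Suc b * n" using assms by simp
    also have "\<dots> \<le> p - 1" using that N_mult_n by (metis Suc_leI mult_le_mono1)
    finally have e_lt: "k + b * n < p - 1" .
    have i_lt: "i < p - 1" using assms n_le_p_minus_1 by simp
    have "(\<Sum>u<p - 1. signed_conj (i + u) * cnj (signed_conj (k + b * n + u)))
        = (- 1) ^ (i + (k + b * n)) * (if i = k + b * n then of_nat p - 1 else - 1)"
      using signed_conj_autocorrelation[OF i_lt e_lt] .
    moreover have "i = k + b * n \<longleftrightarrow> i = k \<and> b = 0"
      using assms by (cases b) auto
    ultimately show ?thesis
      by (cases "i = k \<and> b = 0") (auto simp: power_add neg_one_pow_mult_n)
  qed
  have "(\<Sum>j<n. signed_period (i + j) * cnj (signed_period (k + j)))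
      = (\<Sum>b<N. (- 1) ^ (i + k) * ((if i = k \<and> b = 0 then of_nat p else 0) - (- 1) ^ b))"
    unfolding signed_period_correlation_expand by (rule sum.cong[OF refl], rule inner) simp
  also have "\<dots> = (- 1) ^ (i + k) * ((\<Sum>b<N. if i = k \<and> b = 0 then of_nat p else 0) - (\<Sum>b<N. (- 1) ^ b))"
    by (simp only: sum_subtractf[symmetric] sum_distrib_left)
  also have "\<dots> = (if i = k then of_nat p else 0)"
    using N_pos by (simp add: sum_neg_one_pow_even[OF even_N])
  finally show ?thesis .
qed

end

lemma (in primroot_cyclotomic) twisted_alpha_mult_cnj:
  "(\<omega> powi lam * \<alpha>) * cnj (\<omega> powi lam * \<alpha>) = of_nat p"
proof -
  have "\<omega> powi lam * cnj (\<omega> powi lam) = 1"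
    by (metis complex_norm_square norm_power_int norm_unity_root of_real_1 one_power2 power_int_1_left)
  then show ?thesis using alpha_mult_cnj by (simp add: ac_simps)
qed

lemma (in primroot_cyclotomic) twisted_z_rat_poly_funE:
  assumes lam: "[lam * (int r - 1) = 1] (mod int p)"
  obtains z where "rat_poly_fun z" and "z \<omega> = \<omega> powi lam * \<alpha> * (1 - \<omega>)"
    and "\<And>e. z (\<omega> ^ r ^ e) = (- 1) ^ e * (\<omega> powi lam * \<alpha>) * (1 - \<omega> ^ r ^ e)"
proof -
  define L where "L = nat (lam mod int p)"
  have "\<omega> powi lam = \<omega> powi (lam mod int p)"
    by (rule unity_root_powi_cong[OF p_pos]) (simp add: cong_def)
  also have "lam mod int p = int L" using p_pos by (simp add: L_def)
  finally have powi_L: "\<omega> powi lam = \<omega> ^ L" by simp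
  define z :: "complex \<Rightarrow> complex" where "z w = w ^ L * (\<Prod>k<m. 1 - w ^ r ^ k) * (1 - w)" for w
  have "rat_poly_fun z" unfolding z_def
    by (intro rat_poly_fun_mult rat_poly_fun_prod rat_poly_fun_diff rat_poly_fun_power
        rat_poly_fun_one rat_poly_fun_ident)
  moreover have "z \<omega> = \<omega> powi lam * \<alpha> * (1 - \<omega>)"
    by (simp add: z_def powi_L \<alpha>_def)
  moreover have "z (\<omega> ^ r ^ e) = (- 1) ^ e * (\<omega> powi lam * \<alpha>) * (1 - \<omega> ^ r ^ e)" for e
  proof -
    have "z (\<omega> ^ r ^ e) = (\<omega> powi lam) ^ r ^ e * (\<Prod>k<m. 1 - \<omega> ^ r ^ (k + e)) * (1 - \<omega> ^ r ^ e)"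
      by (simp add: z_def powi_L power_add mult.commute flip: power_mult)
    then show ?thesis using twisted_alpha_conjugate[OF lam, of e] by simp
  qed
  ultimately show ?thesis by (rule that)
qed

lemma (in primroot_cyclotomic_period) funpow_aut_sum_conjugates:
  assumes \<sigma>: "field_aut_on (simple_ext_Q \<omega>) \<sigma>" and \<sigma>_\<omega>: "\<sigma> \<omega> = \<omega> ^ r"
    and lam: "[lam * (int r - 1) = 1] (mod int p)"
  shows "(\<sigma> ^^ s) (\<Sum>k = 1..N. (\<sigma> ^^ (k * n)) (\<omega> powi lam * \<alpha> * (1 - \<omega>)))
    = - (\<omega> powi lam * \<alpha>) * signed_period s"
proof -
  obtain z where z: "rat_poly_fun z" and z_\<omega>: "z \<omega> = \<omega> powi lam * \<alpha> * (1 - \<omega>)"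
    and z_conj: "\<And>e. z (\<omega> ^ r ^ e) = (- 1) ^ e * (\<omega> powi lam * \<alpha>) * (1 - \<omega> ^ r ^ e)"
    using twisted_z_rat_poly_funE[OF lam] by blast
  define x :: "complex \<Rightarrow> complex" where "x w = (\<Sum>k = 1..N. z (w ^ r ^ (k * n)))" for w
  have x: "rat_poly_fun x" unfolding x_def
    by (intro rat_poly_fun_sum rat_poly_fun_compose[OF z] rat_poly_fun_power rat_poly_fun_ident)
  note conj = funpow_field_aut_on_rat_poly_fun[OF \<sigma> \<sigma>_\<omega>]
  have x_\<omega>: "(\<Sum>k = 1..N. (\<sigma> ^^ (k * n)) (\<omega> powi lam * \<alpha> * (1 - \<omega>))) = x \<omega>"
    unfolding z_\<omega>[symmetric] x_def by (simp add: conj[OF z])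
  have pow: "(\<omega> ^ r ^ s) ^ r ^ (k * n) = \<omega> ^ r ^ (s + k * n)" for k
    by (simp add: power_add power_mult)
  have "(\<sigma> ^^ s) (\<Sum>k = 1..N. (\<sigma> ^^ (k * n)) (\<omega> powi lam * \<alpha> * (1 - \<omega>))) = x (\<omega> ^ r ^ s)"
    unfolding x_\<omega> by (rule conj[OF x])
  also have "\<dots> = (\<Sum>k = 1..N. (- 1) ^ (s + k * n) * (\<omega> powi lam * \<alpha>) * (1 - \<omega> ^ r ^ (s + k * n)))"
    by (simp only: x_def pow z_conj)
  also have "\<dots> = - (\<omega> powi lam * \<alpha>) * signed_period s"
    by (rule sum_signed_conjugates)
  finally show ?thesis .
qed

section \<open>Unitarity of \<open>G\<close>\<close>

lemma mat_mult_adjoint_eq_one_mat: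
  fixes f :: "nat \<times> nat \<Rightarrow> complex"
  assumes orth: "\<And>i i'. i < n \<Longrightarrow> i' < n \<Longrightarrow>
      (\<Sum>j<k. f (i, j) * cnj (f (i', j))) = (if i = i' then 1 else 0)"
  shows "mat n k f * mat_adjoint (mat n k f) = 1\<^sub>m n"
proof (rule eq_matI)
  fix i i' assume "i < dim_row (1\<^sub>m n)" "i' < dim_col (1\<^sub>m n)"
  then show "(mat n k f * mat_adjoint (mat n k f)) $$ (i, i') = 1\<^sub>m n $$ (i, i')"
    using orth by (simp add: mat_adjoint_def mat_of_rows_index scalar_prod_def atLeast0LessThan)
qed (simp_all add: mat_adjoint_def)

theorem mainTheorem3:
  fixes n1 p r :: nat and lam :: int and \<sigma> :: "complex \<Rightarrow> complex"
    and \<omega> \<alpha> z x :: complex and m :: nat and G :: "complex mat"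
  assumes n1_odd: "odd n1" and n1_ge: "n1 \<ge> 3"
    and p_prime: "prime p" and p_cong: "[p = 1] (mod n1)"
    and omega_def: "\<omega> = exp (2 * pi * \<i> / of_nat p)"
    and r_prim: "residue_primroot p r"
    and sigma_aut: "field_aut_on (simple_ext_Q \<omega>) \<sigma>"
    and sigma_omega: "\<sigma> \<omega> = \<omega> ^ r"
    and m_def: "m = (p - 1) div 2"
    and alpha_def: "\<alpha> = (\<Prod>k<m. (1 - \<omega> ^ (r ^ k)))"
    and lam_cong: "[lam * (int r - 1) = 1] (mod int p)"
    and z_def: "z = \<omega> powi lam * \<alpha> * (1 - \<omega>)"
    and x_def: "x = (\<Sum>k = 1..(p - 1) div n1. (\<sigma> ^^ (k * n1)) z)"
    and G_def: "G = mat n1 n1 (\<lambda>(i, j). (\<sigma> ^^ ((i + j) mod n1)) x / of_nat p)"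
  shows "G * mat_adjoint G = 1\<^sub>m n1"
proof -
  have "p \<noteq> 2" using p_cong n1_ge by (auto simp: cong_def)
  then have "odd p" using p_prime prime_gt_1_nat[OF p_prime] prime_odd_nat by force
  moreover have "n1 dvd p - 1" using p_cong by (rule cong_to_1_nat)
  ultimately interpret P: primroot_cyclotomic_period p r n1
    using p_prime r_prim n1_odd by unfold_locales
  have \<omega>: "\<omega> = P.\<omega>" unfolding omega_def unity_root_def ..
  define \<beta> where "\<beta> = \<omega> powi lam * \<alpha>"
  have x_conj: "(\<sigma> ^^ s) x = - \<beta> * P.signed_period s" for s
    using P.funpow_aut_sum_conjugates[OF sigma_aut[unfolded \<omega>] sigma_omega[unfolded \<omega>] lam_cong]
    unfolding x_def z_def \<beta>_def alpha_def m_def \<omega> P.\<alpha>_def P.N_def .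
  have "\<beta> * cnj \<beta> = of_nat p"
    unfolding \<beta>_def alpha_def m_def \<omega> P.\<alpha>_def[symmetric] by (rule P.twisted_alpha_mult_cnj)
  define h where "h s = - \<beta> * P.signed_period s / of_nat p" for s
  have "h a * cnj (h b) = P.signed_period a * cnj (P.signed_period b) / of_nat p" for a b
    using \<open>\<beta> * cnj \<beta> = of_nat p\<close> P.p_pos by (simp add: h_def field_simps)
  then have orth: "(\<Sum>j<n1. h (i + j) * cnj (h (i' + j))) = (if i = i' then 1 else 0)"
    if "i < n1" "i' < n1" for i i'
    using P.signed_period_autocorrelation[OF that] P.p_pos by (simp flip: sum_divide_distrib)
  have "G = mat n1 n1 (\<lambda>(i, j). h (i + j))"
    unfolding G_def x_conj P.signed_period_mod h_def ..
  then show ?thesis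
    using orth by (simp add: mat_mult_adjoint_eq_one_mat)
qed

end
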